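(* Let $A$ be a non-empty set of parameters and $\mathcal{BSS}(U)_A$ the collection of all bipolar soft sets over $U$ with parameter set $A$. Then $(\mathcal{BSS}(U)_A,\cap_{\mathcal R},\cup_{\mathcal R},{}^c,(\mathfrak U,\Phi,A),(\Phi,\mathfrak U,A))$ is a De Morgan algebra.
   Context: Let $U$ be a set and $E$ a set of parameters; each parameter $e$ has a formal negation $\lnot e$, and $\lnot A=\{\lnot e:e\in A\}$. A bipolar soft set over $U$ is a triple $(F,G,A)$ with $A\subseteq E$ non-empty, $F:A\to\mathcal P(U)$, $G:\lnot A\to\mathcal P(U)$, $F(e)\cap G(\lnot e)=\emptyset$ for all $e\in A$. For $(F,G,A),(F_1,G_1,A)\in\mathcal{BSS}(U)_A$: $(F,G,A)\cap_{\mathcal R}(F_1,G_1,A)=(H,I,A)$ with $H(e)=F(e)\cap F_1(e)$, $I(\lnot e)=G(\lnot e)\cup G_1(\lnot e)$; $(F,G,A)\cup_{\mathcal R}(F_1,G_1,A)=(H,I,A)$ with $H(e)=F(e)\cup F_1(e)$, $I(\lnot e)=G(\lnot e)\cap G_1(\lnot e)$. The complement is $(F,G,A)^c=(F^c,G^c,A)$ with $F^c(e)=G(\lnot e)$, $G^c(\lnot e)=F(e)$. $(\mathfrak U,\Phi,A)$ has $\mathfrak U(e)=U$, $\Phi(\lnot e)=\emptyset$; $(\Phi,\mathfrak U,A)$ has $\Phi(e)=\emptyset$, $\mathfrak U(\lnot e)=U$, for all $e\in A$. A De Morgan algebra $(L,\wedge,\vee,\neg,1,0)$ is a bounded distributive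 lattice (meet $\wedge$, join $\vee$, top $1$, bottom $0$) with a unary operation $\neg$ satisfying $\neg\neg x=x$ and $\neg(x\wedge y)=\neg x\vee\neg y$ for all $x,y$. *)

theory Defs
  imports Main
begin

datatype 'e neg_param = Neg 'e

type_synonym ('e,'u) bss = "('e \<Rightarrow> 'u set) \<times> ('e neg_param \<Rightarrow> 'u set) \<times> 'e set"

text \<open>Total HOL functions represent the
partial maps F : A \<rightarrow> P(U), G : \<not>A \<rightarrow> P(U); outside A they are fixed to {} so that
equality of bipolar soft sets is equality of the partial maps.\<close>
definition BSS :: "'u set \<Rightarrow> 'e set \<Rightarrow> ('e,'u) bss set" where
  "BSS U A = {(F, G, A'). A' = A \<and>
      (\<forall>e\<in>A. F e \<subseteq> U \<and> G (Neg e) \<subseteq> U \<and> F e \<inter> G (Neg e) = {}) \<and>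
      (\<forall>e. e \<notin> A \<longrightarrow> F e = {} \<and> G (Neg e) = {})}"

definition bss_rinter :: "('e,'u) bss \<Rightarrow> ('e,'u) bss \<Rightarrow> ('e,'u) bss" where
  "bss_rinter X Y = (case X of (F, G, A) \<Rightarrow> case Y of (F1, G1, _) \<Rightarrow>
     (\<lambda>e. if e \<in> A then F e \<inter> F1 e else {},
      \<lambda>ne. case ne of Neg e \<Rightarrow> if e \<in> A then G (Neg e) \<union> G1 (Neg e) else {},
      A))"

definition bss_runion :: "('e,'u) bss \<Rightarrow> ('e,'u) bss \<Rightarrow> ('e,'u) bss" where
  "bss_runion X Y = (case X of (F, G, A) \<Rightarrow> case Y of (F1, G1, _) \<Rightarrow>
     (\<lambda>e. if e \<in> A then F e \<union> F1 e else {},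
      \<lambda>ne. case ne of Neg e \<Rightarrow> if e \<in> A then G (Neg e) \<inter> G1 (Neg e) else {},
      A))"

definition bss_compl :: "('e,'u) bss \<Rightarrow> ('e,'u) bss" where
  "bss_compl X = (case X of (F, G, A) \<Rightarrow>
     (\<lambda>e. if e \<in> A then G (Neg e) else {},
      \<lambda>ne. case ne of Neg e \<Rightarrow> if e \<in> A then F e else {},
      A))"

definition bss_top :: "'u set \<Rightarrow> 'e set \<Rightarrow> ('e,'u) bss" where
  "bss_top U A = (\<lambda>e. if e \<in> A then U else {}, \<lambda>ne. {}, A)"

definition bss_bot :: "'u set \<Rightarrow> 'e set \<Rightarrow> ('e,'u) bss" where
  "bss_bot U A = (\<lambda>e. {}, \<lambda>ne. case ne of Neg e \<Rightarrow> if e \<in> A then U else {}, A)"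

definition de_morgan_algebra ::
  "'a set \<Rightarrow> ('a \<Rightarrow> 'a \<Rightarrow> 'a) \<Rightarrow> ('a \<Rightarrow> 'a \<Rightarrow> 'a) \<Rightarrow> ('a \<Rightarrow> 'a) \<Rightarrow> 'a \<Rightarrow> 'a \<Rightarrow> bool" where
  "de_morgan_algebra L meet join neg one zero \<longleftrightarrow>
     one \<in> L \<and> zero \<in> L \<and>
     (\<forall>x\<in>L. \<forall>y\<in>L. meet x y \<in> L \<and> join x y \<in> L) \<and>
     (\<forall>x\<in>L. neg x \<in> L) \<and>
     (\<forall>x\<in>L. \<forall>y\<in>L. meet x y = meet y x \<and> join x y = join y x) \<and>
     (\<forall>x\<in>L. \<forall>y\<in>L. \<forall>z\<in>L. meet (meet x y) z = meet x (meet y z) \<and>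
                          join (join x y) z = join x (join y z)) \<and>
     (\<forall>x\<in>L. \<forall>y\<in>L. meet x (join x y) = x \<and> join x (meet x y) = x) \<and>
     (\<forall>x\<in>L. \<forall>y\<in>L. \<forall>z\<in>L. meet x (join y z) = join (meet x y) (meet x z)) \<and>
     (\<forall>x\<in>L. meet x one = x \<and> join x zero = x) \<and>
     (\<forall>x\<in>L. neg (neg x) = x) \<and>
     (\<forall>x\<in>L. \<forall>y\<in>L. neg (meet x y) = join (neg x) (neg y))"

end

theory Submission
  imports Defs
begin

text \<open>For each parameter e the pair (F e, G (Neg e)) is an element of the product of the
Boolean algebra of subsets of U with its order dual: restricted intersection and union act
componentwise as (meet, join) and (join, meet), and the complement swaps the two components.
Hence every law of a De Morgan algebra reduces, parameter by parameter, to a Boolean set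
identity; outside A all components are pinned to the empty set, which keeps the absorption,
unit and involution laws exact.\<close>

lemma BSS_E:
  assumes "X \<in> BSS U A"
  obtains F G where "X = (F, G, A)"
    and "\<And>e. e \<in> A \<Longrightarrow> F e \<subseteq> U \<and> G (Neg e) \<subseteq> U \<and> F e \<inter> G (Neg e) = {}"
    and "\<And>e. e \<notin> A \<Longrightarrow> F e = {} \<and> G (Neg e) = {}"
  using assms unfolding BSS_def by auto

lemma neg_param_fun_eqI: "(\<And>e. f (Neg e) = g (Neg e)) \<Longrightarrow> f = g"
  by (rule ext) (metis neg_param.exhaust)

lemmas bss_ops_defs = bss_rinter_def bss_runion_def bss_compl_def bss_top_def bss_bot_def

lemma bss_top_in_BSS: "bss_top U A \<in> BSS U A"
  and bss_bot_in_BSS: "bss_bot U A \<in> BSS U A"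
  by (auto simp: BSS_def bss_top_def bss_bot_def)

lemma bss_rinter_in_BSS: "X \<in> BSS U A \<Longrightarrow> Y \<in> BSS U A \<Longrightarrow> bss_rinter X Y \<in> BSS U A"
  and bss_runion_in_BSS: "X \<in> BSS U A \<Longrightarrow> Y \<in> BSS U A \<Longrightarrow> bss_runion X Y \<in> BSS U A"
  by (auto elim!: BSS_E simp: BSS_def bss_ops_defs split: neg_param.splits) blast+

lemma bss_compl_in_BSS: "X \<in> BSS U A \<Longrightarrow> bss_compl X \<in> BSS U A"
  by (auto elim!: BSS_E simp: BSS_def bss_compl_def split: neg_param.splits) blast+

lemma bss_rinter_commute:
  "X \<in> BSS U A \<Longrightarrow> Y \<in> BSS U A \<Longrightarrow> bss_rinter X Y = bss_rinter Y X"
  by (auto elim!: BSS_E simp: bss_ops_defs intro!: ext neg_param_fun_eqI split: if_splits)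

lemma bss_runion_commute:
  "X \<in> BSS U A \<Longrightarrow> Y \<in> BSS U A \<Longrightarrow> bss_runion X Y = bss_runion Y X"
  by (auto elim!: BSS_E simp: bss_ops_defs intro!: ext neg_param_fun_eqI split: if_splits)

lemma bss_rinter_assoc:
  "X \<in> BSS U A \<Longrightarrow> Y \<in> BSS U A \<Longrightarrow> Z \<in> BSS U A \<Longrightarrow>
    bss_rinter (bss_rinter X Y) Z = bss_rinter X (bss_rinter Y Z)"
  by (auto elim!: BSS_E simp: bss_ops_defs intro!: ext neg_param_fun_eqI split: if_splits)

lemma bss_runion_assoc:
  "X \<in> BSS U A \<Longrightarrow> Y \<in> BSS U A \<Longrightarrow> Z \<in> BSS U A \<Longrightarrow>
    bss_runion (bss_runion X Y) Z = bss_runion X (bss_runion Y Z)"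
  by (auto elim!: BSS_E simp: bss_ops_defs intro!: ext neg_param_fun_eqI split: if_splits)

lemma bss_rinter_runion_absorb:
  "X \<in> BSS U A \<Longrightarrow> Y \<in> BSS U A \<Longrightarrow> bss_rinter X (bss_runion X Y) = X"
  by (auto elim!: BSS_E simp: bss_ops_defs intro!: ext neg_param_fun_eqI split: if_splits)

lemma bss_runion_rinter_absorb:
  "X \<in> BSS U A \<Longrightarrow> Y \<in> BSS U A \<Longrightarrow> bss_runion X (bss_rinter X Y) = X"
  by (auto elim!: BSS_E simp: bss_ops_defs intro!: ext neg_param_fun_eqI split: if_splits)

lemma bss_rinter_runion_distrib:
  "X \<in> BSS U A \<Longrightarrow> Y \<in> BSS U A \<Longrightarrow> Z \<in> BSS U A \<Longrightarrow>
    bss_rinter X (bss_runion Y Z) = bss_runion (bss_rinter X Y) (bss_rinter X Z)"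
  by (auto elim!: BSS_E simp: bss_ops_defs intro!: ext neg_param_fun_eqI split: if_splits)

lemma bss_rinter_top:
  "X \<in> BSS U A \<Longrightarrow> bss_rinter X (bss_top U A) = X"
  by (auto elim!: BSS_E simp: bss_ops_defs intro!: ext neg_param_fun_eqI split: if_splits) blast+

lemma bss_runion_bot:
  "X \<in> BSS U A \<Longrightarrow> bss_runion X (bss_bot U A) = X"
  by (auto elim!: BSS_E simp: bss_ops_defs intro!: ext neg_param_fun_eqI split: if_splits) blast+

lemma bss_compl_compl:
  "X \<in> BSS U A \<Longrightarrow> bss_compl (bss_compl X) = X"
  by (auto elim!: BSS_E simp: bss_ops_defs intro!: ext neg_param_fun_eqI split: if_splits)

lemma bss_compl_rinter:
  "X \<in> BSS U A \<Longrightarrow> Y \<in> BSS U A \<Longrightarrow>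
    bss_compl (bss_rinter X Y) = bss_runion (bss_compl X) (bss_compl Y)"
  by (auto elim!: BSS_E simp: bss_ops_defs intro!: ext neg_param_fun_eqI split: if_splits)

theorem mainTheorem9:
  fixes U :: "'u set" and A :: "'e set"
  assumes "A \<noteq> {}"
  shows "de_morgan_algebra (BSS U A) bss_rinter bss_runion bss_compl (bss_top U A) (bss_bot U A)"
  unfolding de_morgan_algebra_def
  by (intro conjI ballI)
    (simp_all add: bss_top_in_BSS bss_bot_in_BSS bss_rinter_in_BSS bss_runion_in_BSS
      bss_compl_in_BSS bss_rinter_commute bss_runion_commute bss_rinter_assoc bss_runion_assoc
      bss_rinter_runion_absorb bss_runion_rinter_absorb bss_rinter_runion_distrib
      bss_rinter_top bss_runion_bot bss_compl_compl bss_compl_rinter)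

end
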